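(* Let $D$ be a friendship digraph. Then $D$ is a fancy wheel digraph or a regular digraph. Moreover, if $D$ is a regular digraph, then $D$ has $k^2-k+1$ vertices for some integer $k\geq 2$, where $k$ is the outdegree of each vertex of $D$.
   Context: All digraphs are finite and have neither loops nor parallel arcs (a pair of opposite arcs $(u,v)$ and $(v,u)$ is allowed). For a vertex $v$, $N^+(v)$ and $N^-(v)$ denote the sets of out-neighbors and in-neighbors of $v$. A friendship digraph is a nontrivial digraph (at least two vertices) in which any two distinct vertices have exactly one common out-neighbor. A fancy wheel digraph is a digraph $D$ such that (W1) $D$ has exactly one vertex $v$ with $N^+(v)=N^-(v)=V(D)-\{v\}$, and (W2) $D-v$ is a vertex-disjoint union of directed cycles. For a positive integer $k$, a $k$-regular digraph is one in which every vertex has outdegree $k$ and indegree $k$; a digraph is regular if it is $k$-regular for some positive integer $k$. *)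

theory Defs
  imports Main
begin

text \<open>A digraph is given by a finite vertex set V and an arc relation A \<subseteq> V \<times> V
  without loops. Parallel arcs cannot occur (A is a set); opposite arcs are allowed.\<close>

definition digraph :: "'a set \<Rightarrow> ('a \<times> 'a) set \<Rightarrow> bool" where
  "digraph V A \<longleftrightarrow> finite V \<and> A \<subseteq> V \<times> V \<and> (\<forall>v. (v, v) \<notin> A)"

definition out_nbrs :: "('a \<times> 'a) set \<Rightarrow> 'a \<Rightarrow> 'a set" where
  "out_nbrs A v = {w. (v, w) \<in> A}"

definition in_nbrs :: "('a \<times> 'a) set \<Rightarrow> 'a \<Rightarrow> 'a set" where
  "in_nbrs A v = {u. (u, v) \<in> A}"

definition friendship_digraph :: "'a set \<Rightarrow> ('a \<times> 'a) set \<Rightarrow> bool" where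
  "friendship_digraph V A \<longleftrightarrow> digraph V A \<and> card V \<ge> 2 \<and>
     (\<forall>u\<in>V. \<forall>v\<in>V. u \<noteq> v \<longrightarrow> (\<exists>!w. w \<in> out_nbrs A u \<and> w \<in> out_nbrs A v))"

definition directed_cycle :: "'a set \<Rightarrow> ('a \<times> 'a) set \<Rightarrow> bool" where
  "directed_cycle W B \<longleftrightarrow> (\<exists>xs. distinct xs \<and> length xs \<ge> 2 \<and> set xs = W \<and>
     B = {(xs ! i, xs ! ((i + 1) mod length xs)) | i. i < length xs})"

definition disjoint_union_of_cycles :: "'a set \<Rightarrow> ('a \<times> 'a) set \<Rightarrow> bool" where
  "disjoint_union_of_cycles W B \<longleftrightarrow> (\<exists>P. (\<Union>P = W) \<and>
     (\<forall>C\<in>P. \<forall>C'\<in>P. C \<noteq> C' \<longrightarrow> C \<inter> C' = {}) \<and>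
     (\<forall>C\<in>P. directed_cycle C (B \<inter> (C \<times> C))) \<and>
     B = (\<Union>C\<in>P. B \<inter> (C \<times> C)))"

definition fancy_wheel :: "'a set \<Rightarrow> ('a \<times> 'a) set \<Rightarrow> bool" where
  "fancy_wheel V A \<longleftrightarrow> digraph V A \<and>
     (\<exists>!v. v \<in> V \<and> out_nbrs A v = V - {v} \<and> in_nbrs A v = V - {v}) \<and>
     (\<forall>v\<in>V. out_nbrs A v = V - {v} \<and> in_nbrs A v = V - {v} \<longrightarrow>
        disjoint_union_of_cycles (V - {v}) (A \<inter> ((V - {v}) \<times> (V - {v}))))"

definition k_regular :: "nat \<Rightarrow> 'a set \<Rightarrow> ('a \<times> 'a) set \<Rightarrow> bool" where
  "k_regular k V A \<longleftrightarrow> digraph V A \<and>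
     (\<forall>v\<in>V. card (out_nbrs A v) = k \<and> card (in_nbrs A v) = k)"

definition regular_digraph :: "'a set \<Rightarrow> ('a \<times> 'a) set \<Rightarrow> bool" where
  "regular_digraph V A \<longleftrightarrow> (\<exists>k>0. k_regular k V A)"

end

theory Submission
  imports Defs Complex_Main "HOL-Combinatorics.Orbits"
begin

text \<open>Write n for the number of vertices. If (u, w) is not an arc, the in-neighbours of w
  inject into the out-neighbours of u, so indeg w \<le> outdeg u. Summing 1 / (n - outdeg u) and
  1 / (n - indeg w) over all non-arcs (u, w), the pairs (u, u) included, gives n both times,
  hence all these inequalities are equalities: indeg = outdeg everywhere, and vertices that
  are not joined by an arc have equal out-degrees.

  If all out-degrees equal k, counting the walks of length two from a vertex gives
  k * k = n - 1 + k. Otherwise some vertex c has an out-degree shared by no other vertex;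
  then c dominates all other vertices, these have in- and out-degree 2, and removing c leaves a
  loopless 1-regular digraph, the graph of a fixed-point-free permutation whose orbits are
  the required directed cycles.\<close>

lemma sum_inverse_card_Image:
  assumes "finite R"
  shows "(\<Sum>(u, w)\<in>R. 1 / real (card (R `` {u}))) = card (Domain R)"
proof -
  have "(\<Sum>u\<in>Domain R. \<Sum>w\<in>R `` {u}. 1 / real (card (R `` {u})))
      = (\<Sum>(u, w)\<in>(SIGMA u:Domain R. R `` {u}). 1 / real (card (R `` {u})))"
    using assms by (intro sum.Sigma) (auto simp: finite_Domain)
  moreover have "(SIGMA u:Domain R. R `` {u}) = R" by auto
  ultimately have "(\<Sum>(u, w)\<in>R. 1 / real (card (R `` {u})))
      = (\<Sum>u\<in>Domain R. \<Sum>w\<in>R `` {u}. 1 / real (card (R `` {u})))"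
    by simp
  also have "\<dots> = (\<Sum>u\<in>Domain R. 1)"
    using assms by (intro sum.cong) auto
  finally show ?thesis by simp
qed

lemma sum_inverse_card_converse_Image:
  assumes "finite R"
  shows "(\<Sum>(u, w)\<in>R. 1 / real (card (R\<inverse> `` {w}))) = card (Range R)"
proof -
  have "R\<inverse> = prod.swap ` R" by auto
  then have "(\<Sum>(u, w)\<in>R. 1 / real (card (R\<inverse> `` {w})))
      = (\<Sum>(w, u)\<in>R\<inverse>. 1 / real (card (R\<inverse> `` {w})))"
    by (simp add: sum.reindex case_prod_unfold)
  also have "\<dots> = card (Range R)"
    using assms by (simp add: sum_inverse_card_Image)
  finally show ?thesis .
qed

text \<open>Weighting every pair of R by the reciprocal size of its row, respectively of its
  column, gives total weights card (Domain R) and card (Range R).\<close>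
lemma card_Image_eq_card_converse_Image:
  assumes "finite R" and "card (Domain R) \<le> card (Range R)"
    and row_le_column: "\<And>u w. (u, w) \<in> R \<Longrightarrow> card (R `` {u}) \<le> card (R\<inverse> `` {w})"
    and "(u, w) \<in> R"
  shows "card (R `` {u}) = card (R\<inverse> `` {w})"
proof (rule ccontr)
  have pos: "card (R `` {u}) > 0" if "(u, w) \<in> R" for u w
    using that assms(1) by (auto simp: card_gt_0_iff)
  let ?row = "\<lambda>(u, w). 1 / real (card (R `` {u}))"
  let ?column = "\<lambda>(u, w). 1 / real (card (R\<inverse> `` {w}))"
  assume "card (R `` {u}) \<noteq> card (R\<inverse> `` {w})"
  then have "card (R `` {u}) < card (R\<inverse> `` {w})"
    using row_le_column[OF \<open>(u, w) \<in> R\<close>] by simp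
  then have "?column (u, w) < ?row (u, w)"
    using pos[OF \<open>(u, w) \<in> R\<close>] by (simp add: frac_less2)
  moreover have "?column p \<le> ?row p" if "p \<in> R" for p
    using that row_le_column pos by (cases p) (simp add: frac_le)
  ultimately have "sum ?column R < sum ?row R"
    by (rule sum_strict_mono_strong[OF assms(1) \<open>(u, w) \<in> R\<close>])
  then have "card (Range R) < card (Domain R)"
    unfolding sum_inverse_card_Image[OF assms(1)] sum_inverse_card_converse_Image[OF assms(1)]
    by simp
  then show False
    using assms(2) by simp
qed

lemma directed_cycle_orbit:
  assumes "permutation f" and "f x \<noteq> x"
  shows "directed_cycle (orbit f x) {(y, f y) | y. y \<in> orbit f x}"
proof -
  have x: "x \<in> orbit f x" using assms(1) by (rule permutation_self_in_orbit)
  define p where "p = funpow_dist1 f x x"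
  define xs where "xs = map (\<lambda>i. (f ^^ i) x) [0..<p]"
  have period: "(f ^^ p) x = x" unfolding p_def using x by (rule funpow_dist1_prop)
  have "p \<noteq> 1" using period assms(2) by auto
  then have "p \<ge> 2" unfolding p_def by linarith
  have "inj_on (\<lambda>i. (f ^^ i) x) {0..<p}" unfolding p_def using x by (rule inj_on_funpow_dist1)
  then have "distinct xs" unfolding xs_def by (simp add: distinct_map)
  have "orbit f x = (\<lambda>i. (f ^^ i) x) ` {0..<p}"
    unfolding p_def using x by (rule orbit_conv_funpow_dist1)
  then have "set xs = orbit f x" unfolding xs_def by simp
  have [simp]: "length xs = p" unfolding xs_def by simp
  have nth: "xs ! i = (f ^^ i) x" if "i < p" for i unfolding xs_def using that by simp
  have succ: "xs ! ((i + 1) mod p) = f (xs ! i)" if "i < p" for i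
    using that \<open>p \<ge> 2\<close> nth funpow_mod_eq[OF period, of "Suc i"] by simp
  have "{(xs ! i, xs ! ((i + 1) mod length xs)) | i. i < length xs}
      = {(xs ! i, f (xs ! i)) | i. i < length xs}"
    using succ by force
  also have "\<dots> = {(y, f y) | y. y \<in> orbit f x}"
    unfolding \<open>set xs = orbit f x\<close>[symmetric] in_set_conv_nth by blast
  finally show ?thesis
    unfolding directed_cycle_def using \<open>distinct xs\<close> \<open>p \<ge> 2\<close> \<open>set xs = orbit f x\<close>
    by (intro exI[of _ xs]) simp
qed

lemma disjoint_union_of_cycles_permutes:
  assumes "f permutes W" and "finite W" and "\<forall>x\<in>W. f x \<noteq> x"
  shows "disjoint_union_of_cycles W {(x, f x) | x. x \<in> W}"
proof -
  let ?B = "{(x, f x) | x. x \<in> W}"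
  have "permutation f" using assms(1,2) by (auto simp: permutation_permutes)
  then have self: "x \<in> orbit f x" for x by (rule permutation_self_in_orbit)
  have orbit_eq: "orbit f z = orbit f x" if "z \<in> orbit f x" for x z
    using cyclic_on_orbit'[OF \<open>permutation f\<close>] that by (rule orbit_cyclic_eq3)
  have orbit_W: "orbit f x \<subseteq> W" if "x \<in> W" for x
    using assms(1) that by (rule permutes_orbit_subset)
  have arcs_orbit: "?B \<inter> (orbit f x \<times> orbit f x) = {(y, f y) | y. y \<in> orbit f x}"
    if "x \<in> W" for x
    using orbit_W[OF that] by (auto intro: orbit.step)
  show ?thesis
    unfolding disjoint_union_of_cycles_def
  proof (intro exI[of _ "orbit f ` W"] conjI ballI impI)
    show "\<Union> (orbit f ` W) = W" using orbit_W self by blast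
    show "C \<inter> C' = {}" if "C \<in> orbit f ` W" "C' \<in> orbit f ` W" "C \<noteq> C'" for C C'
      using that orbit_eq by blast
    show "directed_cycle C (?B \<inter> (C \<times> C))" if "C \<in> orbit f ` W" for C
      using that arcs_orbit assms(3) directed_cycle_orbit[OF \<open>permutation f\<close>] by auto
    show "?B = (\<Union>C\<in>orbit f ` W. ?B \<inter> (C \<times> C))"
      using self by (auto intro: orbit.base)
  qed
qed

lemma disjoint_union_of_cycles_if_1_regular:
  assumes "k_regular 1 W B"
  shows "disjoint_union_of_cycles W B"
proof -
  have "finite W" and "B \<subseteq> W \<times> W" and loopless: "\<And>x. (x, x) \<notin> B"
    using assms by (auto simp: k_regular_def digraph_def)
  have "\<forall>x\<in>W. \<exists>y. out_nbrs B x = {y}"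
    using assms by (simp add: k_regular_def card_1_singleton_iff)
  then obtain s where s: "\<And>x. x \<in> W \<Longrightarrow> out_nbrs B x = {s x}" by metis
  define f where "f x = (if x \<in> W then s x else x)" for x
  have arc_iff: "(x, y) \<in> B \<longleftrightarrow> x \<in> W \<and> y = f x" for x y
  proof
    assume "(x, y) \<in> B"
    then have "x \<in> W" and "y \<in> out_nbrs B x" using \<open>B \<subseteq> W \<times> W\<close> by (auto simp: out_nbrs_def)
    then show "x \<in> W \<and> y = f x" using s by (simp add: f_def)
  next
    assume "x \<in> W \<and> y = f x"
    then show "(x, y) \<in> B" using s[of x] unfolding f_def out_nbrs_def by auto
  qed
  have "inj_on f W"
  proof (rule inj_onI)
    fix a b assume "a \<in> W" "b \<in> W" "f a = f b"
    then have "a \<in> in_nbrs B (f a)" and "b \<in> in_nbrs B (f a)"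
      by (simp_all add: in_nbrs_def arc_iff)
    moreover have "f a \<in> W" using arc_iff[of a "f a"] \<open>a \<in> W\<close> \<open>B \<subseteq> W \<times> W\<close> by blast
    then have "card (in_nbrs B (f a)) = 1" using assms by (simp add: k_regular_def)
    ultimately show "a = b" by (auto simp: card_1_singleton_iff)
  qed
  moreover have "f ` W \<subseteq> W" using arc_iff \<open>B \<subseteq> W \<times> W\<close> by blast
  ultimately have "bij_betw f W W" using \<open>finite W\<close> by (simp add: bij_betw_def endo_inj_surj)
  then have "f permutes W" by (rule bij_imp_permutes) (simp add: f_def)
  moreover have "B = {(x, f x) | x. x \<in> W}" using arc_iff by auto
  moreover have "\<forall>x\<in>W. f x \<noteq> x" using arc_iff loopless by metis
  ultimately show ?thesis using \<open>finite W\<close> by (simp add: disjoint_union_of_cycles_permutes)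
qed

locale friendship =
  fixes V :: "'a set" and A :: "('a \<times> 'a) set"
  assumes friendship_digraph: "friendship_digraph V A"
begin

abbreviation outdeg :: "'a \<Rightarrow> nat" where "outdeg u \<equiv> card (out_nbrs A u)"
abbreviation indeg :: "'a \<Rightarrow> nat" where "indeg u \<equiv> card (in_nbrs A u)"

lemma digraph: "digraph V A"
  using friendship_digraph by (simp add: friendship_digraph_def)

lemma finite_vertices [simp]: "finite V"
  using digraph by (simp add: digraph_def)

lemma card_vertices_ge_2: "card V \<ge> 2"
  using friendship_digraph by (simp add: friendship_digraph_def)

lemma arcs_subset: "A \<subseteq> V \<times> V"
  using digraph by (simp add: digraph_def)

lemma loop_free [simp]: "(v, v) \<notin> A"
  using digraph by (simp add: digraph_def)

lemma out_nbrs_subset: "out_nbrs A u \<subseteq> V"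
  using arcs_subset by (auto simp: out_nbrs_def)

lemma in_nbrs_subset: "in_nbrs A u \<subseteq> V"
  using arcs_subset by (auto simp: in_nbrs_def)

lemma finite_out_nbrs [simp]: "finite (out_nbrs A u)"
  using out_nbrs_subset finite_vertices by (rule finite_subset)

lemma finite_in_nbrs [simp]: "finite (in_nbrs A u)"
  using in_nbrs_subset finite_vertices by (rule finite_subset)

lemma out_nbrs_Int_singleton:
  assumes "u \<in> V" and "v \<in> V" and "u \<noteq> v"
  obtains w where "out_nbrs A u \<inter> out_nbrs A v = {w}"
proof -
  have "\<exists>!w. w \<in> out_nbrs A u \<and> w \<in> out_nbrs A v"
    using friendship_digraph assms by (simp add: friendship_digraph_def)
  then obtain w where "out_nbrs A u \<inter> out_nbrs A v = {w}" by blast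
  then show thesis by (rule that)
qed

text \<open>Each in-neighbour v of w shares exactly one out-neighbour with u, and distinct
  in-neighbours v, v' give distinct ones: otherwise v and v' would have the two common
  out-neighbours w and that one, which lies in out_nbrs A u and hence differs from w.\<close>
lemma indeg_le_outdeg_if_non_arc:
  assumes "u \<in> V" and "(u, w) \<notin> A"
  shows "indeg w \<le> outdeg u"
proof -
  have "\<forall>v\<in>in_nbrs A w. \<exists>y. out_nbrs A u \<inter> out_nbrs A v = {y}"
  proof
    fix v assume "v \<in> in_nbrs A w"
    then have "v \<in> V" and "v \<noteq> u" using in_nbrs_subset assms(2) by (auto simp: in_nbrs_def)
    then show "\<exists>y. out_nbrs A u \<inter> out_nbrs A v = {y}"
      using assms(1) by (metis out_nbrs_Int_singleton)
  qed
  then obtain g where g: "\<And>v. v \<in> in_nbrs A w \<Longrightarrow> out_nbrs A u \<inter> out_nbrs A v = {g v}"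
    by metis
  have "inj_on g (in_nbrs A w)"
  proof (rule inj_onI, rule ccontr)
    fix v v' assume v: "v \<in> in_nbrs A w" and v': "v' \<in> in_nbrs A w"
      and "g v = g v'" and "v \<noteq> v'"
    have "v \<in> V" and "v' \<in> V" using v v' in_nbrs_subset by auto
    then obtain y where y: "out_nbrs A v \<inter> out_nbrs A v' = {y}"
      using \<open>v \<noteq> v'\<close> by (rule out_nbrs_Int_singleton)
    have "w \<in> out_nbrs A v \<inter> out_nbrs A v'" using v v' by (simp add: in_nbrs_def out_nbrs_def)
    moreover have "g v \<in> out_nbrs A v \<inter> out_nbrs A v'" using g[OF v] g[OF v'] \<open>g v = g v'\<close> by blast
    ultimately have "g v = w" using y by auto
    moreover have "g v \<in> out_nbrs A u" using g[OF v] by blast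
    ultimately show False using assms(2) by (simp add: out_nbrs_def)
  qed
  moreover have "g ` in_nbrs A w \<subseteq> out_nbrs A u" using g by blast
  ultimately show ?thesis by (simp add: card_inj_on_le)
qed

lemma outdeg_eq_indeg_if_non_arc:
  assumes "u \<in> V" and "w \<in> V" and "(u, w) \<notin> A"
  shows "outdeg u = indeg w"
proof -
  define R where "R = V \<times> V - A"
  have row: "R `` {x} = V - out_nbrs A x" if "x \<in> V" for x
    using that by (auto simp: R_def out_nbrs_def)
  have column: "R\<inverse> `` {x} = V - in_nbrs A x" if "x \<in> V" for x
    using that by (auto simp: R_def in_nbrs_def)
  have diagonal: "(x, x) \<in> R" if "x \<in> V" for x using that by (simp add: R_def)
  have "R \<subseteq> V \<times> V" by (auto simp: R_def)
  then have "Domain R = V" and "Range R = V" using diagonal by blast+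
  have card_row: "card (R `` {x}) = card V - outdeg x" if "x \<in> V" for x
    using that by (simp add: row card_Diff_subset out_nbrs_subset)
  have card_column: "card (R\<inverse> `` {x}) = card V - indeg x" if "x \<in> V" for x
    using that by (simp add: column card_Diff_subset in_nbrs_subset)
  have "card (R `` {u}) = card (R\<inverse> `` {w})"
  proof (rule card_Image_eq_card_converse_Image)
    show "finite R" by (simp add: R_def)
    show "card (Domain R) \<le> card (Range R)"
      using \<open>Domain R = V\<close> \<open>Range R = V\<close> by simp
    show "(u, w) \<in> R" using assms by (simp add: R_def)
    fix x y assume "(x, y) \<in> R"
    then have "x \<in> V" "y \<in> V" "(x, y) \<notin> A" by (auto simp: R_def)
    then show "card (R `` {x}) \<le> card (R\<inverse> `` {y})"
      using indeg_le_outdeg_if_non_arc by (simp add: card_row card_column diff_le_mono2)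
  qed
  moreover have "outdeg u \<le> card V" and "indeg w \<le> card V"
    using out_nbrs_subset in_nbrs_subset by (simp_all add: card_mono)
  ultimately show ?thesis using assms by (simp add: card_row card_column)
qed

lemma indeg_eq_outdeg: "u \<in> V \<Longrightarrow> indeg u = outdeg u"
  using outdeg_eq_indeg_if_non_arc[of u u] by simp

lemma outdeg_eq_if_non_arc:
  "u \<in> V \<Longrightarrow> w \<in> V \<Longrightarrow> (u, w) \<notin> A \<Longrightarrow> outdeg w = outdeg u"
  using outdeg_eq_indeg_if_non_arc[of u w] indeg_eq_outdeg[of w] by simp

lemma arc_if_outdeg_neq:
  "u \<in> V \<Longrightarrow> w \<in> V \<Longrightarrow> outdeg w \<noteq> outdeg u \<Longrightarrow> (u, w) \<in> A"
  using outdeg_eq_if_non_arc by blast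

lemma outdeg_add_outdeg_if_neq:
  assumes "u \<in> V" and "v \<in> V" and "outdeg u \<noteq> outdeg v"
  shows "outdeg u + outdeg v = card V + 1"
proof -
  have "(u, w) \<in> A \<or> (v, w) \<in> A" if "w \<in> V" for w
    using that assms arc_if_outdeg_neq[of u w] arc_if_outdeg_neq[of v w]
    by (cases "outdeg w = outdeg u") auto
  then have "w \<in> out_nbrs A u \<union> out_nbrs A v" if "w \<in> V" for w
    using that by (auto simp: out_nbrs_def)
  then have "out_nbrs A u \<union> out_nbrs A v = V" using out_nbrs_subset by blast
  moreover obtain w where "out_nbrs A u \<inter> out_nbrs A v = {w}"
    using assms by (metis out_nbrs_Int_singleton)
  ultimately show ?thesis using card_Un_Int[of "out_nbrs A u" "out_nbrs A v"] by simp
qed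

text \<open>If x has the out-degree of u, every vertex of another out-degree is a common
  out-neighbour of u and x, so there is at most one such vertex.\<close>
lemma ex_vertex_of_unique_outdeg:
  assumes "u \<in> V" and "v \<in> V" and "outdeg u \<noteq> outdeg v"
  obtains c where "c \<in> V" and "\<forall>z\<in>V - {c}. outdeg z \<noteq> outdeg c"
proof (cases "\<forall>z\<in>V - {u}. outdeg z \<noteq> outdeg u")
  case True
  then show thesis using that assms(1) by blast
next
  case False
  then obtain x where x: "x \<in> V" "x \<noteq> u" "outdeg x = outdeg u" by blast
  then obtain w where w: "out_nbrs A u \<inter> out_nbrs A x = {w}"
    using assms(1) by (metis out_nbrs_Int_singleton)
  have "y = w" if "y \<in> V" and "outdeg y \<noteq> outdeg u" for y
  proof -
    have "(u, y) \<in> A" and "(x, y) \<in> A"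
      using that assms(1) x by (auto intro!: arc_if_outdeg_neq)
    then show ?thesis using w by (auto simp: out_nbrs_def)
  qed
  then have "outdeg z = outdeg u" if "z \<in> V - {v}" for z
    using that assms by (metis Diff_iff singletonI)
  then have "\<forall>z\<in>V - {v}. outdeg z \<noteq> outdeg v" using assms(3) by simp
  then show thesis using that assms(2) by blast
qed

context
  fixes c
  assumes hub: "c \<in> V" and unique_outdeg: "\<forall>z\<in>V - {c}. outdeg z \<noteq> outdeg c"
begin

lemma out_nbrs_hub: "out_nbrs A c = V - {c}"
  using out_nbrs_subset hub unique_outdeg arc_if_outdeg_neq
  by (fastforce simp: out_nbrs_def)

lemma outdeg_hub: "outdeg c = card V - 1"
  using hub by (simp add: out_nbrs_hub)

lemma in_nbrs_hub: "in_nbrs A c = V - {c}"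
proof (rule card_subset_eq)
  show "in_nbrs A c \<subseteq> V - {c}" using in_nbrs_subset by (auto simp: in_nbrs_def)
  show "card (in_nbrs A c) = card (V - {c})"
    using hub indeg_eq_outdeg outdeg_hub by simp
qed simp

lemma outdeg_rim: "z \<in> V - {c} \<Longrightarrow> outdeg z = 2"
  using outdeg_add_outdeg_if_neq[of z c] hub unique_outdeg outdeg_hub card_vertices_ge_2
  by fastforce

lemma k_regular_1_rim: "k_regular 1 (V - {c}) (A \<inter> ((V - {c}) \<times> (V - {c})))"
  unfolding k_regular_def
proof (intro conjI ballI)
  show "digraph (V - {c}) (A \<inter> ((V - {c}) \<times> (V - {c})))"
    by (simp add: digraph_def)
  fix z assume z: "z \<in> V - {c}"
  then have "z \<in> in_nbrs A c" and "z \<in> out_nbrs A c"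
    by (simp_all add: in_nbrs_hub out_nbrs_hub)
  then have "c \<in> out_nbrs A z" and "c \<in> in_nbrs A z"
    by (simp_all add: in_nbrs_def out_nbrs_def)
  moreover have "out_nbrs (A \<inter> ((V - {c}) \<times> (V - {c}))) z = out_nbrs A z - {c}"
    using z out_nbrs_subset by (auto simp: out_nbrs_def)
  moreover have "in_nbrs (A \<inter> ((V - {c}) \<times> (V - {c}))) z = in_nbrs A z - {c}"
    using z in_nbrs_subset by (auto simp: in_nbrs_def)
  ultimately show "card (out_nbrs (A \<inter> ((V - {c}) \<times> (V - {c}))) z) = 1"
    and "card (in_nbrs (A \<inter> ((V - {c}) \<times> (V - {c}))) z) = 1"
    using z outdeg_rim indeg_eq_outdeg by simp_all
qed

lemma fancy_wheel_if_unique_outdeg: "fancy_wheel V A"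
proof -
  have only_hub: "v = c" if "v \<in> V" and "out_nbrs A v = V - {v}" for v
  proof (rule ccontr)
    assume "v \<noteq> c"
    then have "outdeg v \<noteq> outdeg c" using unique_outdeg that(1) by simp
    moreover have "outdeg v = outdeg c" using that outdeg_hub by simp
    ultimately show False by simp
  qed
  show ?thesis
    unfolding fancy_wheel_def
  proof (intro conjI ballI impI)
    show "digraph V A" by (rule digraph)
    show "\<exists>!v. v \<in> V \<and> out_nbrs A v = V - {v} \<and> in_nbrs A v = V - {v}"
    proof (rule ex1I[of _ c])
      show "c \<in> V \<and> out_nbrs A c = V - {c} \<and> in_nbrs A c = V - {c}"
        using hub out_nbrs_hub in_nbrs_hub by simp
    qed (use only_hub in blast)
    fix v assume "v \<in> V" and "out_nbrs A v = V - {v} \<and> in_nbrs A v = V - {v}"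
    then have "v = c" using only_hub by blast
    then show "disjoint_union_of_cycles (V - {v}) (A \<inter> ((V - {v}) \<times> (V - {v})))"
      using k_regular_1_rim by (simp add: disjoint_union_of_cycles_if_1_regular)
  qed
qed

end

lemma regular_digraph_if_outdeg_const:
  assumes "\<forall>u\<in>V. \<forall>v\<in>V. outdeg u = outdeg v"
  shows "regular_digraph V A"
proof -
  have "\<not> card V \<le> Suc 0" using card_vertices_ge_2 by simp
  then obtain u v where "u \<in> V" "v \<in> V" "u \<noteq> v" by (auto simp: card_le_Suc0_iff_eq)
  then obtain w where "out_nbrs A u \<inter> out_nbrs A v = {w}" by (rule out_nbrs_Int_singleton)
  then have "outdeg u > 0" by (auto simp: card_gt_0_iff)
  moreover have "k_regular (outdeg u) V A"
    unfolding k_regular_def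
  proof (intro conjI ballI)
    show "digraph V A" by (rule digraph)
    fix x assume "x \<in> V"
    then have "outdeg x = outdeg u" using assms \<open>u \<in> V\<close> by blast
    then show "outdeg x = outdeg u" and "indeg x = outdeg u"
      using indeg_eq_outdeg[OF \<open>x \<in> V\<close>] by simp_all
  qed
  ultimately show ?thesis unfolding regular_digraph_def by blast
qed

lemma sum_indeg_out_nbrs:
  assumes "u \<in> V"
  shows "(\<Sum>w\<in>out_nbrs A u. indeg w) = card V - 1 + outdeg u"
proof -
  have "(\<Sum>w\<in>out_nbrs A u. indeg w) = card (SIGMA w:out_nbrs A u. in_nbrs A w)"
    by simp
  also have "(SIGMA w:out_nbrs A u. in_nbrs A w)
      = prod.swap ` (SIGMA v:V. out_nbrs A u \<inter> out_nbrs A v)"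
    using arcs_subset by (auto simp: in_nbrs_def out_nbrs_def)
  also have "card \<dots> = (\<Sum>v\<in>V. card (out_nbrs A u \<inter> out_nbrs A v))"
    by (simp add: card_image)
  also have "\<dots> = outdeg u + (\<Sum>v\<in>V - {u}. card (out_nbrs A u \<inter> out_nbrs A v))"
    using assms by (simp add: sum.remove)
  also have "(\<Sum>v\<in>V - {u}. card (out_nbrs A u \<inter> out_nbrs A v)) = (\<Sum>v\<in>V - {u}. 1)"
    using assms by (intro sum.cong) (auto elim: out_nbrs_Int_singleton)
  finally show ?thesis using assms by simp
qed

lemma card_vertices_if_k_regular:
  assumes "k_regular k V A"
  shows "k \<ge> 2" and "card V = k ^ 2 - k + 1"
proof -
  have "V \<noteq> {}" using card_vertices_ge_2 by auto
  then obtain u where "u \<in> V" by blast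
  then have "k * k = card V - 1 + k"
    using sum_indeg_out_nbrs[OF \<open>u \<in> V\<close>] assms out_nbrs_subset[of u]
    by (simp add: k_regular_def subset_iff)
  then have count: "k * k + 1 = card V + k" using card_vertices_ge_2 by simp
  then show "k \<ge> 2" using card_vertices_ge_2 by (cases "k \<le> 1") (auto simp: le_Suc_eq)
  have "k \<le> k * k" by simp
  then have "card V = k * k - k + 1" using count by linarith
  then show "card V = k ^ 2 - k + 1" by (simp add: power2_eq_square)
qed

end

theorem theorem1p1:
  fixes V :: "'a set" and A :: "('a \<times> 'a) set"
  assumes "friendship_digraph V A"
  shows "(fancy_wheel V A \<or> regular_digraph V A) \<and>
    (regular_digraph V A \<longrightarrow>
       (\<exists>k::nat. k \<ge> 2 \<and> (\<forall>v\<in>V. card (out_nbrs A v) = k) \<and> card V = k ^ 2 - k + 1))"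
proof -
  interpret friendship V A by (rule friendship.intro) (rule assms)
  have "fancy_wheel V A \<or> regular_digraph V A"
  proof (cases "\<forall>u\<in>V. \<forall>v\<in>V. outdeg u = outdeg v")
    case True
    then show ?thesis using regular_digraph_if_outdeg_const by blast
  next
    case False
    then obtain u v where "u \<in> V" "v \<in> V" "outdeg u \<noteq> outdeg v" by blast
    then obtain c where "c \<in> V" "\<forall>z\<in>V - {c}. outdeg z \<noteq> outdeg c"
      by (rule ex_vertex_of_unique_outdeg)
    then show ?thesis using fancy_wheel_if_unique_outdeg by blast
  qed
  moreover have "\<exists>k::nat. k \<ge> 2 \<and> (\<forall>v\<in>V. outdeg v = k) \<and> card V = k ^ 2 - k + 1"
    if regular: "regular_digraph V A"
  proof -
    obtain k where k: "k_regular k V A" using regular unfolding regular_digraph_def by blast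
    then have "\<forall>v\<in>V. outdeg v = k" by (simp add: k_regular_def)
    then show ?thesis using card_vertices_if_k_regular[OF k] by blast
  qed
  ultimately show ?thesis by blast
qed

end
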